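(* Let $G=K_{r_1,\dots,r_k}$ with $r_i\ge 7$ for every $i\in[k]$, and suppose $G$ does not have a good bisection. Then for every edge $e\in E(G)$, the graph $G-e$ does not have a good bisection.
   Context: A bisection of a graph $G$ is a bipartite spanning subgraph $H$ of $G$ with a bipartition into two partition sets (every edge of $H$ joining the two sets) whose sizes differ by at most one. It is good if $2d_H(v)\ge d_G(v)-1$ for every $v\in V(G)$. *)

theory Defs
  imports Main
begin

text \<open>Finite simple graphs are given by a vertex set V and an edge set E of
  2-element subsets of V.\<close>

definition degree :: "'a set set \<Rightarrow> 'a \<Rightarrow> nat" where
  "degree E v = card {e \<in> E. v \<in> e}"

definition is_bisection :: "'a set \<Rightarrow> 'a set set \<Rightarrow> 'a set set \<Rightarrow> 'a set \<Rightarrow> 'a set \<Rightarrow> bool" where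
  "is_bisection V E H A B \<longleftrightarrow>
     H \<subseteq> E \<and> A \<union> B = V \<and> A \<inter> B = {} \<and>
     (\<forall>e\<in>H. \<exists>a\<in>A. \<exists>b\<in>B. e = {a, b}) \<and>
     \<bar>int (card A) - int (card B)\<bar> \<le> 1"

definition has_good_bisection :: "'a set \<Rightarrow> 'a set set \<Rightarrow> bool" where
  "has_good_bisection V E \<longleftrightarrow>
     (\<exists>H A B. is_bisection V E H A B \<and>
        (\<forall>v\<in>V. 2 * int (degree H v) \<ge> int (degree E v) - 1))"

text \<open>Complete multipartite graph K_{r_1,...,r_k}, parts indexed by i < length r,
  part i being {(i,j). j < r!i}.\<close>

definition mp_vertices :: "nat list \<Rightarrow> (nat \<times> nat) set" where
  "mp_vertices r = {(i, j). i < length r \<and> j < r ! i}"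

definition mp_edges :: "nat list \<Rightarrow> (nat \<times> nat) set set" where
  "mp_edges r = {{u, v} | u v. u \<in> mp_vertices r \<and> v \<in> mp_vertices r \<and> fst u \<noteq> fst v}"

end

theory Submission
  imports Defs
begin

text \<open>Let H with sides A, B be a good bisection of G - e and let X be the set of all edges
  of G between A and B; then X is a good bisection of G. Away from e nothing changes, and if e
  crosses, both degrees at its endpoints go up by one. If e = {v, y} lies inside one side and
  the part P of v had no other vertex on that side, counting would give
  deg v \<ge> 2 deg_X v + |P| - 3, whereas goodness of v in G - e gives deg v \<le> 2 deg_X v + 2;
  so for |P| \<ge> 6 there is such a part-mate w. It is not on e, hence good, and it has exactly
  the same degrees as v.\<close>

definition cut_edges :: "'a set set \<Rightarrow> 'a set \<Rightarrow> 'a set \<Rightarrow> 'a set set" where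
  "cut_edges E A B = {f \<in> E. \<exists>a\<in>A. \<exists>b\<in>B. f = {a, b}}"

lemma cut_edges_commute: "cut_edges E A B = cut_edges E B A"
  by (auto simp: cut_edges_def insert_commute)

lemma cut_edges_subset: "cut_edges E A B \<subseteq> E"
  by (auto simp: cut_edges_def)

lemma is_bisection_cut_edges:
  assumes "is_bisection V E' H A B"
  shows "is_bisection V E (cut_edges E A B) A B"
  using assms by (auto simp: is_bisection_def cut_edges_def)

lemma bisection_subset_cut_edges:
  assumes "is_bisection V E' H A B" and "E' \<subseteq> E"
  shows "H \<subseteq> cut_edges E A B"
  using assms by (auto simp: is_bisection_def cut_edges_def)

lemma degree_mono: "finite E \<Longrightarrow> H \<subseteq> E \<Longrightarrow> degree H v \<le> degree E v"
  unfolding degree_def by (rule card_mono) auto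

lemma degree_Diff_singleton_notin: "v \<notin> e \<Longrightarrow> degree (E - {e}) v = degree E v"
  unfolding degree_def by (metis Diff_iff singletonD)

lemma degree_Diff_singleton:
  assumes "finite E" "e \<in> E" "v \<in> e"
  shows "degree E v = Suc (degree (E - {e}) v)"
proof -
  have "{f \<in> E. v \<in> f} = insert e {f \<in> E - {e}. v \<in> f}" using assms by auto
  then show ?thesis using assms(1) by (simp add: degree_def)
qed

lemma finite_mp_vertices: "finite (mp_vertices r)"
proof -
  have "mp_vertices r = (SIGMA i:{..<length r}. {..<r!i})" by (auto simp: mp_vertices_def)
  then show ?thesis by simp
qed

lemma finite_mp_edges: "finite (mp_edges r)"
proof -
  have "mp_edges r \<subseteq> Pow (mp_vertices r)" by (auto simp: mp_edges_def)
  then show ?thesis using finite_mp_vertices by (meson finite_Pow_iff finite_subset)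
qed

lemma doubleton_in_mp_edges_iff:
  "{a, b} \<in> mp_edges r \<longleftrightarrow> a \<in> mp_vertices r \<and> b \<in> mp_vertices r \<and> fst a \<noteq> fst b"
proof
  assume "a \<in> mp_vertices r \<and> b \<in> mp_vertices r \<and> fst a \<noteq> fst b"
  then show "{a, b} \<in> mp_edges r" unfolding mp_edges_def by blast
qed (auto simp: mp_edges_def doubleton_eq_iff)

lemma card_mp_part:
  assumes "i < length r"
  shows "card {u \<in> mp_vertices r. fst u = i} = r ! i"
proof -
  have "{u \<in> mp_vertices r. fst u = i} = Pair i ` {..<r ! i}"
    using assms by (auto simp: mp_vertices_def)
  then show ?thesis by (simp add: card_image inj_on_def)
qed

lemma degree_doubletons:
  assumes "{f \<in> E. v \<in> f} = (\<lambda>u. {v, u}) ` U" "v \<notin> U"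
  shows "degree E v = card U"
proof -
  have "inj_on (\<lambda>u. {v, u}) U" using assms(2) by (auto simp: inj_on_def doubleton_eq_iff)
  then show ?thesis using assms(1) by (simp add: degree_def card_image)
qed

lemma degree_mp_edges:
  assumes "v \<in> mp_vertices r"
  shows "degree (mp_edges r) v = card {u \<in> mp_vertices r. fst u \<noteq> fst v}"
proof (rule degree_doubletons)
  show "{f \<in> mp_edges r. v \<in> f} = (\<lambda>u. {v, u}) ` {u \<in> mp_vertices r. fst u \<noteq> fst v}"
    using assms by (auto simp: mp_edges_def insert_commute) (metis prod.collapse)
qed simp

lemma degree_cut_mp_edges:
  assumes "A \<union> B = mp_vertices r" "A \<inter> B = {}" "v \<in> A"
  shows "degree (cut_edges (mp_edges r) A B) v = card {u \<in> B. fst u \<noteq> fst v}"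
proof (rule degree_doubletons)
  show "{f \<in> cut_edges (mp_edges r) A B. v \<in> f} = (\<lambda>u. {v, u}) ` {u \<in> B. fst u \<noteq> fst v}"
    using assms by (auto simp: cut_edges_def doubleton_in_mp_edges_iff doubleton_eq_iff)
qed (use assms in auto)

text \<open>If the part P of v lies, apart from v, entirely on the other side B,
  then deg v = |A| + |B| - |P| while the cut degree of v is only |B| - |P| + 1.\<close>

lemma degree_mp_edges_ge_cut_without_mate:
  assumes AB: "A \<union> B = mp_vertices r" "A \<inter> B = {}" "card B \<le> card A + 1"
    and v: "v \<in> A" and no_mate: "\<not> (\<exists>w\<in>A. w \<noteq> v \<and> fst w = fst v)"
  shows "int (degree (mp_edges r) v) \<ge>
           2 * int (degree (cut_edges (mp_edges r) A B) v) + int (r ! fst v) - 3"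
proof -
  let ?V = "mp_vertices r"
  define P where "P = {u \<in> ?V. fst u = fst v}"
  have fin: "finite A" "finite B" "finite P"
    using finite_mp_vertices[of r] AB(1) by (auto simp: P_def intro: finite_subset)
  have "v \<in> ?V" using AB(1) v by blast
  then have vP: "v \<in> P" and cP: "card P = r ! fst v"
    using card_mp_part by (auto simp: P_def mp_vertices_def)
  have "B = {u \<in> B. fst u \<noteq> fst v} \<union> (P - {v})" and "{u \<in> B. fst u \<noteq> fst v} \<inter> (P - {v}) = {}"
    using AB v no_mate by (auto simp: P_def)
  then have "card B = card {u \<in> B. fst u \<noteq> fst v} + card (P - {v})"
    using fin by (metis card_Un_disjoint finite_Un)
  then have cB: "card B = card {u \<in> B. fst u \<noteq> fst v} + (card P - 1)"
    using vP by simp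
  have "?V = {u \<in> ?V. fst u \<noteq> fst v} \<union> P" by (auto simp: P_def)
  then have "card ?V = card {u \<in> ?V. fst u \<noteq> fst v} + card P"
    using finite_mp_vertices[of r] fin(3) card_Un_disjoint[of "{u \<in> ?V. fst u \<noteq> fst v}" P]
    by (auto simp: P_def)
  moreover have "card ?V = card A + card B" using AB fin card_Un_disjoint by metis
  moreover have "card P \<ge> 1" using vP fin(3) card_0_eq by fastforce
  ultimately show ?thesis
    using AB v \<open>v \<in> ?V\<close> cP cB by (simp add: degree_mp_edges degree_cut_mp_edges)
qed

lemma good_cut_edges_off_inner_edge:
  assumes E: "finite E" "e \<in> E" and H: "H \<subseteq> E - {e}" "H \<subseteq> cut_edges E A B"
    and good: "2 * int (degree H v) \<ge> int (degree (E - {e}) v) - 1"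
    and v: "v \<notin> e \<or> e \<in> cut_edges E A B"
  shows "2 * int (degree (cut_edges E A B) v) \<ge> int (degree E v) - 1"
proof (cases "v \<in> e")
  case True
  let ?X = "cut_edges E A B"
  have finX: "finite ?X" using E(1) cut_edges_subset by (rule finite_subset[rotated])
  have "e \<in> ?X" using v True by simp
  have "H \<subseteq> ?X - {e}" using H by blast
  then have "degree H v \<le> degree (?X - {e}) v" using finX by (simp add: degree_mono)
  moreover note degree_Diff_singleton[OF finX \<open>e \<in> ?X\<close> True] degree_Diff_singleton[OF E True]
  ultimately show ?thesis using good by linarith
next
  case False
  have "degree H v \<le> degree (cut_edges E A B) v"
    using E(1) H(2) cut_edges_subset by (intro degree_mono) (rule finite_subset[rotated])
  then show ?thesis using good False by (simp add: degree_Diff_singleton_notin)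
qed

lemma good_cut_mp_edges_at_inner_edge_endpoint:
  assumes AB: "A \<union> B = mp_vertices r" "A \<inter> B = {}" "card B \<le> card A + 1"
    and parts: "\<forall>i<length r. r ! i \<ge> 6"
    and H: "H \<subseteq> cut_edges (mp_edges r) A B"
    and good: "\<forall>w\<in>mp_vertices r. 2 * int (degree H w) \<ge> int (degree (mp_edges r - {e}) w) - 1"
    and e: "e \<in> mp_edges r" "e \<notin> cut_edges (mp_edges r) A B" and v: "v \<in> e" "v \<in> A"
  shows "2 * int (degree (cut_edges (mp_edges r) A B) v) \<ge> int (degree (mp_edges r) v) - 1"
proof -
  let ?V = "mp_vertices r" and ?E = "mp_edges r" and ?X = "cut_edges (mp_edges r) A B"
  obtain y where ey: "e = {v, y}" using e(1) v(1) by (auto simp: mp_edges_def)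
  have y: "y \<in> A" "fst y \<noteq> fst v"
    using e AB(1) v(2) ey by (auto simp: doubleton_in_mp_edges_iff cut_edges_def)
  have vV: "v \<in> ?V" using AB(1) v(2) by blast
  have finX: "finite ?X" using finite_mp_edges cut_edges_subset by (rule finite_subset[rotated])
  have good_at: "2 * int (degree ?X u) \<ge> int (degree (?E - {e}) u) - 1" if "u \<in> ?V" for u
    using good that degree_mono[OF finX H, of u] by fastforce
  have "\<exists>w\<in>A. w \<noteq> v \<and> fst w = fst v"
  proof (rule ccontr)
    assume "\<not> ?thesis"
    from degree_mp_edges_ge_cut_without_mate[OF AB v(2) this]
    have "int (degree ?E v) \<ge> 2 * int (degree ?X v) + 3"
      using parts vV by (force simp: mp_vertices_def)
    then show False
      using good_at[OF vV] degree_Diff_singleton[OF finite_mp_edges e(1) v(1)] by simp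
  qed
  then obtain w where w: "w \<in> A" "w \<noteq> v" "fst w = fst v" by blast
  have "w \<notin> e" using w y ey by auto
  moreover have "w \<in> ?V" using AB(1) w(1) by blast
  ultimately have "2 * int (degree ?X w) \<ge> int (degree ?E w) - 1"
    using good_at degree_Diff_singleton_notin by metis
  moreover have "degree ?X w = degree ?X v" "degree ?E w = degree ?E v"
    using AB w v(2) vV \<open>w \<in> ?V\<close> by (simp_all add: degree_cut_mp_edges degree_mp_edges)
  ultimately show ?thesis by simp
qed

lemma good_cut_mp_edges_of_good_bisection_Diff:
  assumes parts: "\<forall>i<length r. r ! i \<ge> 6" and e: "e \<in> mp_edges r"
    and bis: "is_bisection (mp_vertices r) (mp_edges r - {e}) H A B"
    and good: "\<forall>w\<in>mp_vertices r. 2 * int (degree H w) \<ge> int (degree (mp_edges r - {e}) w) - 1"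
    and vV: "v \<in> mp_vertices r"
  shows "2 * int (degree (cut_edges (mp_edges r) A B) v) \<ge> int (degree (mp_edges r) v) - 1"
proof -
  let ?V = "mp_vertices r" and ?E = "mp_edges r" and ?X = "cut_edges (mp_edges r) A B"
  have AB: "A \<union> B = ?V" "A \<inter> B = {}" "card B \<le> card A + 1"
    and BA: "B \<union> A = ?V" "B \<inter> A = {}" "card A \<le> card B + 1"
    and H: "H \<subseteq> ?E - {e}" "H \<subseteq> ?X" "H \<subseteq> cut_edges ?E B A"
    using bis bisection_subset_cut_edges[OF bis Diff_subset] cut_edges_commute[of ?E A B]
    by (auto simp: is_bisection_def)
  show ?thesis
  proof (cases "v \<notin> e \<or> e \<in> ?X")
    case True
    show ?thesis
      by (rule good_cut_edges_off_inner_edge[OF finite_mp_edges e H(1,2) bspec[OF good vV] True])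
  next
    case False
    then have "v \<in> e" "e \<notin> ?X" "e \<notin> cut_edges ?E B A" using cut_edges_commute[of ?E A B] by auto
    consider "v \<in> A" | "v \<in> B" using vV AB(1) by auto
    then show ?thesis
    proof cases
      case 1
      from good_cut_mp_edges_at_inner_edge_endpoint[OF AB parts H(2) good e \<open>e \<notin> ?X\<close> \<open>v \<in> e\<close> this]
      show ?thesis .
    next
      case 2
      from good_cut_mp_edges_at_inner_edge_endpoint[OF BA parts H(3) good e \<open>e \<notin> cut_edges ?E B A\<close> \<open>v \<in> e\<close> this]
      show ?thesis by (simp only: cut_edges_commute[of ?E B A])
    qed
  qed
qed

theorem proposition3p4:
  fixes r :: "nat list" and e :: "(nat \<times> nat) set"
  assumes "\<forall>i < length r. r ! i \<ge> 7"
    and "\<not> has_good_bisection (mp_vertices r) (mp_edges r)"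
    and "e \<in> mp_edges r"
  shows "\<not> has_good_bisection (mp_vertices r) (mp_edges r - {e})"
proof
  assume "has_good_bisection (mp_vertices r) (mp_edges r - {e})"
  then obtain H A B where bis: "is_bisection (mp_vertices r) (mp_edges r - {e}) H A B"
    and good: "\<forall>v\<in>mp_vertices r. 2 * int (degree H v) \<ge> int (degree (mp_edges r - {e}) v) - 1"
    unfolding has_good_bisection_def by blast
  have parts: "\<forall>i<length r. r ! i \<ge> 6" using assms(1) by (simp add: Suc_leD eval_nat_numeral)
  have "is_bisection (mp_vertices r) (mp_edges r) (cut_edges (mp_edges r) A B) A B"
    using bis by (rule is_bisection_cut_edges)
  moreover have "\<forall>v\<in>mp_vertices r.
      2 * int (degree (cut_edges (mp_edges r) A B) v) \<ge> int (degree (mp_edges r) v) - 1"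
    using good_cut_mp_edges_of_good_bisection_Diff[OF parts assms(3) bis good] by blast
  ultimately have "has_good_bisection (mp_vertices r) (mp_edges r)"
    unfolding has_good_bisection_def by blast
  with assms(2) show False ..
qed

end
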